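(* Let $N,N'$ be phylogenetic networks in tier $k>0$ on a label set $X$ with $|X|=n$, and suppose $N$ and $N'$ are unlabelled isomorphic. Then there is a sequence of at most $2n$ valid head moves transforming $N$ into $N'$ (as labelled networks).
   Context: A (binary) phylogenetic network on a finite label set $X$ ($|X|\ge 2$) is a directed acyclic graph without parallel edges having exactly one root (indegree 0, outdegree 1), exactly $|X|$ leaves (indegree 1, outdegree 0) bijectively labelled by $X$, and all other nodes are either split nodes (indegree 1, outdegree 2) or reticulations (indegree 2, outdegree 1). Tier $k$: exactly $k$ reticulations. Two networks are unlabelled isomorphic if there is a bijection between their node sets preserving edges (ignoring leaf labels); labelled networks are identified up to label-preserving isomorphism. Subdividing an edge $(a,b)$ means replacing it by a new node $x$ and edges $(a,x),(x,b)$; suppressing an indegree-1 outdegree-1 node $x$ with parent $a$ and child $b$ means deleting $x$ and its edges and adding $(a,b)$. Head move of $(u,v)$ ($v$ a reticulation) to an edge $f$: delete $(u,v)$, subdivide $f$ with new node $v'$, suppress $v$, add $(u,v')$; valid only if the result is a phylogenetic network. *)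

theory Defs
  imports Main "HOL-Library.Multiset"
begin

text \<open>A network: node set, arcs as a multiset (so that parallel arcs are representable
during head moves; phylogenetic networks forbid them), and a leaf labelling.\<close>

record ('v, 'x) pnet =
  nodes :: "'v set"
  arcs  :: "('v \<times> 'v) multiset"
  lab   :: "'v \<Rightarrow> 'x"

definition indeg :: "('v \<times> 'v) multiset \<Rightarrow> 'v \<Rightarrow> nat" where
  "indeg E x = size (filter_mset (\<lambda>e. snd e = x) E)"

definition outdeg :: "('v \<times> 'v) multiset \<Rightarrow> 'v \<Rightarrow> nat" where
  "outdeg E x = size (filter_mset (\<lambda>e. fst e = x) E)"

definition leaves :: "('v, 'x) pnet \<Rightarrow> 'v set" where
  "leaves N = {x \<in> nodes N. indeg (arcs N) x = 1 \<and> outdeg (arcs N) x = 0}"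

definition reticulations :: "('v, 'x) pnet \<Rightarrow> 'v set" where
  "reticulations N = {x \<in> nodes N. indeg (arcs N) x = 2 \<and> outdeg (arcs N) x = 1}"

definition phylo_net :: "'x set \<Rightarrow> ('v, 'x) pnet \<Rightarrow> bool" where
  "phylo_net X N \<longleftrightarrow>
     finite X \<and> card X \<ge> 2 \<and>
     finite (nodes N) \<and>
     (\<forall>e \<in># arcs N. fst e \<in> nodes N \<and> snd e \<in> nodes N) \<and>
     (\<forall>e. count (arcs N) e \<le> 1) \<and>
     acyclic (set_mset (arcs N)) \<and>
     card {x \<in> nodes N. indeg (arcs N) x = 0} = 1 \<and>
     (\<forall>x \<in> nodes N.
        (indeg (arcs N) x = 0 \<and> outdeg (arcs N) x = 1) \<or>
        (indeg (arcs N) x = 1 \<and> outdeg (arcs N) x = 0) \<or>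
        (indeg (arcs N) x = 1 \<and> outdeg (arcs N) x = 2) \<or>
        (indeg (arcs N) x = 2 \<and> outdeg (arcs N) x = 1)) \<and>
     bij_betw (lab N) (leaves N) X"

definition tier :: "('v, 'x) pnet \<Rightarrow> nat" where
  "tier N = card (reticulations N)"

definition unlabelled_iso :: "('v, 'x) pnet \<Rightarrow> ('w, 'x) pnet \<Rightarrow> bool" where
  "unlabelled_iso N M \<longleftrightarrow>
     (\<exists>\<phi>. bij_betw \<phi> (nodes N) (nodes M) \<and> image_mset (map_prod \<phi> \<phi>) (arcs N) = arcs M)"

definition labelled_iso :: "('v, 'x) pnet \<Rightarrow> ('w, 'x) pnet \<Rightarrow> bool" where
  "labelled_iso N M \<longleftrightarrow>
     (\<exists>\<phi>. bij_betw \<phi> (nodes N) (nodes M) \<and> image_mset (map_prod \<phi> \<phi>) (arcs N) = arcs M \<and>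
          (\<forall>x \<in> leaves N. lab M (\<phi> x) = lab N x))"

text \<open>The newly created subdivision node v' is given the name of the suppressed node v
 (the result is only relevant up to isomorphism).  If f is one of the two remaining
 arcs at v, i.e. (w,v) or (v,c), subdividing and suppressing gives back N.\<close>

definition head_move_result :: "('v, 'x) pnet \<Rightarrow> 'v \<Rightarrow> 'v \<Rightarrow> ('v \<times> 'v) \<Rightarrow> ('v, 'x) pnet" where
  "head_move_result N u v f =
     (let E1 = arcs N - {#(u, v)#};
          w = (THE w. (w, v) \<in># E1);
          c = (THE c. (v, c) \<in># E1)
      in if f = (w, v) \<or> f = (v, c) then N
         else N\<lparr>arcs := E1 - {#(w, v), (v, c), f#} + {#(w, c), (fst f, v), (v, snd f), (u, v)#}\<rparr>)"

definition head_move :: "'x set \<Rightarrow> ('v, 'x) pnet \<Rightarrow> ('v, 'x) pnet \<Rightarrow> bool" where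
  "head_move X N M \<longleftrightarrow>
     (\<exists>u v f. (u, v) \<in># arcs N \<and> v \<in> reticulations N \<and>
              f \<in># arcs N - {#(u, v)#} \<and>
              M = head_move_result N u v f \<and> phylo_net X M)"

end

theory Submission
  imports Defs
begin

text \<open>Since N and N' are unlabelled isomorphic, transporting the labels of N' back to N shows
  that N' is, as a labelled network, N with its leaves permuted by some g; it remains to realise
  a leaf permutation by at most 2n head moves.

  Fix a reticulation r. While r subdivides a pendant arc, think of the tails of the pendant
  arcs, together with the other parent of r, as n + 1 slots holding n leaves, one slot being
  free. Moving the head of the arc from the free slot to r onto the pendant arc of a leaf x
  carries r over to x; read in slots, x moves into the free slot and frees its old one. Sorting a permutation with one free
  slot in this way takes at most one move per misplaced leaf plus one per cycle, which together
  with the moves putting r onto a pendant arc and back stays within 2n.\<close>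

section \<open>Degrees and pendant arcs\<close>

definition pendant_arcs :: "('v \<Rightarrow> 'v) \<Rightarrow> 'v set \<Rightarrow> ('v \<times> 'v) multiset" where
  "pendant_arcs P S = image_mset (\<lambda>l. (P l, l)) (mset_set S)"

lemma indeg_plus [simp]: "indeg (A + B) x = indeg A x + indeg B x"
  by (simp add: indeg_def)

lemma outdeg_plus [simp]: "outdeg (A + B) x = outdeg A x + outdeg B x"
  by (simp add: outdeg_def)

lemma indeg_add_mset [simp]: "indeg (add_mset e A) x = (if snd e = x then 1 else 0) + indeg A x"
  by (simp add: indeg_def)

lemma outdeg_add_mset [simp]: "outdeg (add_mset e A) x = (if fst e = x then 1 else 0) + outdeg A x"
  by (simp add: outdeg_def)

lemma indeg_empty [simp]: "indeg {#} x = 0"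
  by (simp add: indeg_def)

lemma outdeg_empty [simp]: "outdeg {#} x = 0"
  by (simp add: outdeg_def)

lemma indeg_eq_0I: "\<forall>p\<in>#A. snd p \<noteq> x \<Longrightarrow> indeg A x = 0"
  by (induction A) auto

lemma outdeg_eq_0I: "\<forall>p\<in>#A. fst p \<noteq> x \<Longrightarrow> outdeg A x = 0"
  by (induction A) auto

lemma count_image_mset_mset_set:
  "finite S \<Longrightarrow> count (image_mset f (mset_set S)) y = card {x\<in>S. f x = y}"
  by (simp add: count_conv_size_mset filter_mset_image_mset)

lemma card_filter_remove:
  assumes "finite S" "x \<in> S"
  shows "card {l\<in>S. P l} = card {l\<in>S - {x}. P l} + (if P x then 1 else 0)"
proof (cases "P x")
  case True
  then have "{l\<in>S. P l} = insert x {l\<in>S - {x}. P l}"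
    using assms(2) by auto
  then show ?thesis
    using assms(1) True by simp
next
  case False
  then have "{l\<in>S. P l} = {l\<in>S - {x}. P l}"
    by auto
  then show ?thesis
    using False by simp
qed

lemma image_mset_fun_upd:
  assumes "finite S" "x \<in> S"
  shows "image_mset (f(x := y)) (mset_set S) + {#f x#} = image_mset f (mset_set S) + {#y#}"
proof -
  have S: "mset_set S = add_mset x (mset_set (S - {x}))"
    using assms by (simp add: mset_set.remove)
  have "image_mset (f(x := y)) (mset_set (S - {x})) = image_mset f (mset_set (S - {x}))"
    by (rule image_mset_cong) (use assms in auto)
  then show ?thesis
    by (subst (1 2) S) simp
qed

lemma image_mset_agree_but_one:
  assumes "finite L" "h \<in> L" "image_mset f (mset_set L) = image_mset g (mset_set L)"
    and "\<forall>l\<in>L - {h}. f l = g l"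
  shows "f h = g h"
proof -
  have L: "mset_set L = add_mset h (mset_set (L - {h}))"
    using assms(1,2) by (simp add: mset_set.remove)
  have "image_mset f (mset_set (L - {h})) = image_mset g (mset_set (L - {h}))"
    using assms(1,4) by (auto intro!: image_mset_cong)
  then show ?thesis
    using assms(3) unfolding L by simp
qed

lemma indeg_pendant_arcs: "finite S \<Longrightarrow> indeg (pendant_arcs P S) x = (if x \<in> S then 1 else 0)"
  unfolding indeg_def pendant_arcs_def by (simp add: filter_mset_image_mset Collect_conv_if)

lemma outdeg_pendant_arcs: "finite S \<Longrightarrow> outdeg (pendant_arcs P S) x = card {l\<in>S. P l = x}"
  unfolding outdeg_def pendant_arcs_def by (simp add: filter_mset_image_mset)

lemma count_pendant_arcs:
  "finite S \<Longrightarrow> count (pendant_arcs P S) (a, b) = (if b \<in> S \<and> a = P b then 1 else 0)"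
  unfolding pendant_arcs_def by (simp add: count_image_mset_mset_set Collect_conv_if conj_commute)

lemma mem_pendant_arcs: "finite S \<Longrightarrow> p \<in># pendant_arcs P S \<longleftrightarrow> snd p \<in> S \<and> fst p = P (snd p)"
  by (cases p) (simp add: pendant_arcs_def, auto)

lemma pendant_arcs_cong: "(\<And>l. l \<in> S \<Longrightarrow> P l = P' l) \<Longrightarrow> pendant_arcs P S = pendant_arcs P' S"
  unfolding pendant_arcs_def by (cases "finite S") (auto intro!: image_mset_cong)

lemma pendant_arcs_remove:
  "finite S \<Longrightarrow> x \<in> S \<Longrightarrow> pendant_arcs P S = add_mset (P x, x) (pendant_arcs P (S - {x}))"
  unfolding pendant_arcs_def by (simp add: mset_set.remove)

lemma image_pendant_arcs:
  assumes "inj_on g L" "g ` L = L" "S \<subseteq> L" "finite L"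
    and "\<forall>l\<in>S. P l \<notin> L" "\<forall>x. x \<notin> L \<longrightarrow> g x = x"
  shows "image_mset (map_prod g g) (pendant_arcs P S) = pendant_arcs (P \<circ> inv_into L g) (g ` S)"
proof -
  have finS: "finite S" using assms(3,4) by (rule finite_subset)
  have "image_mset (map_prod g g) (pendant_arcs P S) = image_mset (\<lambda>l. (P l, g l)) (mset_set S)"
    unfolding pendant_arcs_def image_mset.compositionality
    by (rule image_mset_cong) (use assms(5,6) finS in auto)
  also have "\<dots> = image_mset (\<lambda>m. (P (inv_into L g m), m)) (image_mset g (mset_set S))"
    unfolding image_mset.compositionality
    by (rule image_mset_cong) (use assms(1,3) finS in \<open>auto simp: inv_into_f_f\<close>)
  also have "image_mset g (mset_set S) = mset_set (g ` S)"
    using inj_on_subset[OF assms(1,3)] by (rule image_mset_mset_set)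
  finally show ?thesis unfolding pendant_arcs_def by (simp add: comp_def)
qed

text \<open>A cycle of E cannot pass through a node of Z, so it is a cycle of S.\<close>

lemma acyclic_arcs_into_sinks:
  assumes acyc: "acyclic S" and sub: "E \<subseteq> S \<union> {p. snd p \<in> Z}" and tails: "\<forall>p\<in>E. fst p \<notin> Z"
  shows "acyclic E"
proof -
  have "(x, y) \<in> E\<^sup>+ \<Longrightarrow> (y, z) \<in> E \<Longrightarrow> (x, y) \<in> S\<^sup>+" for x y z
  proof (induction arbitrary: z rule: trancl_induct)
    case (base y)
    then show ?case using sub tails by force
  next
    case (step y z')
    then have "(y, z') \<in> S" using sub tails by force
    with step show ?case by (meson trancl_into_trancl)
  qed
  then show ?thesis
    using acyc unfolding acyclic_def by (meson tranclD)
qed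

lemma acyclic_add_pendant_arcs:
  assumes "acyclic (set_mset B)" "\<forall>p\<in>#B. fst p \<notin> L" "\<forall>l\<in>L. P l \<notin> L" "finite L"
  shows "acyclic (set_mset (B + pendant_arcs P L))"
  by (rule acyclic_arcs_into_sinks[OF assms(1), of _ L]) (use assms in \<open>auto simp: mem_pendant_arcs\<close>)

lemma phylo_net_arcs_in_nodes: "phylo_net X N \<Longrightarrow> p \<in># arcs N \<Longrightarrow> fst p \<in> nodes N \<and> snd p \<in> nodes N"
  unfolding phylo_net_def by blast

lemma phylo_net_simple: "phylo_net X N \<Longrightarrow> count (arcs N) p \<le> 1"
  unfolding phylo_net_def by blast

lemma phylo_net_acyclic: "phylo_net X N \<Longrightarrow> acyclic (set_mset (arcs N))"
  unfolding phylo_net_def by blast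

lemma phylo_net_no_loop: "phylo_net X N \<Longrightarrow> (x, x) \<notin># arcs N"
  using phylo_net_acyclic[of X N] unfolding acyclic_def by auto

lemma phylo_net_indeg_le_2: "phylo_net X N \<Longrightarrow> v \<in> nodes N \<Longrightarrow> indeg (arcs N) v \<le> 2"
  unfolding phylo_net_def by fastforce

lemma phylo_net_outdeg_le_2: "phylo_net X N \<Longrightarrow> v \<in> nodes N \<Longrightarrow> outdeg (arcs N) v \<le> 2"
  unfolding phylo_net_def by fastforce

lemma leaves_subset_nodes: "leaves N \<subseteq> nodes N"
  unfolding leaves_def by auto

lemma finite_leaves: "phylo_net X N \<Longrightarrow> finite (leaves N)"
  unfolding phylo_net_def leaves_def by auto

lemma card_leaves: "phylo_net X N \<Longrightarrow> card (leaves N) = card X"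
  unfolding phylo_net_def using bij_betw_same_card by blast

lemma tail_not_leaf: "p \<in># arcs N \<Longrightarrow> fst p \<notin> leaves N"
proof
  assume "p \<in># arcs N" "fst p \<in> leaves N"
  then have "p \<in># filter_mset (\<lambda>q. fst q = fst p) (arcs N)" "outdeg (arcs N) (fst p) = 0"
    unfolding leaves_def by simp_all
  then show False
    unfolding outdeg_def by (metis empty_iff set_mset_empty size_eq_0_iff_empty)
qed

lemma leaves_cong:
  "nodes M = nodes N \<Longrightarrow> (\<And>x. indeg (arcs M) x = indeg (arcs N) x) \<Longrightarrow>
   (\<And>x. outdeg (arcs M) x = outdeg (arcs N) x) \<Longrightarrow> leaves M = leaves N"
  unfolding leaves_def by simp

lemma phylo_net_arcs_update:
  assumes "phylo_net X N" "nodes M = nodes N" "lab M = lab N"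
    "\<And>x. indeg (arcs M) x = indeg (arcs N) x" "\<And>x. outdeg (arcs M) x = outdeg (arcs N) x"
    "\<forall>p\<in>#arcs M. fst p \<in> nodes N \<and> snd p \<in> nodes N" "\<forall>p. count (arcs M) p \<le> 1"
    "acyclic (set_mset (arcs M))"
  shows "phylo_net X M"
  using assms leaves_cong[of M N] unfolding phylo_net_def by simp

lemma not_three_parents:
  assumes "phylo_net X N" "(a, c) \<in># arcs N" "(b, c) \<in># arcs N" "(d, c) \<in># arcs N"
    and "a \<noteq> b" "a \<noteq> d" "b \<noteq> d"
  shows False
proof -
  have "{#(a, c), (b, c), (d, c)#} \<subseteq># filter_mset (\<lambda>p. snd p = c) (arcs N)"
    using assms(2-7) by (intro mset_subset_eqI) (auto simp: count_inI)
  then have "size {#(a, c), (b, c), (d, c)#} \<le> indeg (arcs N) c"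
    unfolding indeg_def by (rule size_mset_mono)
  moreover have "indeg (arcs N) c \<le> 2"
    using assms(1,2) phylo_net_arcs_in_nodes phylo_net_indeg_le_2 by fastforce
  ultimately show False by simp
qed

lemma size_2_mset:
  assumes "size M = 2"
  obtains a b where "M = {#a, b#}"
proof -
  obtain a B where "M = {#a#} + B" "size B = 1"
    using assms by (auto simp: numeral_2_eq_2 elim: size_mset_SucE)
  moreover obtain b where "B = {#b#}"
    using \<open>size B = 1\<close> size_1_singleton_mset by blast
  ultimately show ?thesis using that by simp
qed

lemma reticulation_arcs:
  assumes ph: "phylo_net X N" and r: "r \<in> reticulations N"
  obtains u w c where "u \<noteq> w" "filter_mset (\<lambda>p. snd p = r) (arcs N) = {#(u, r), (w, r)#}"
    "filter_mset (\<lambda>p. fst p = r) (arcs N) = {#(r, c)#}"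
proof -
  have "size (filter_mset (\<lambda>p. snd p = r) (arcs N)) = 2"
    using r unfolding reticulations_def indeg_def by simp
  then obtain a b where ab: "filter_mset (\<lambda>p. snd p = r) (arcs N) = {#a, b#}"
    using size_2_mset by blast
  have "a \<in># filter_mset (\<lambda>p. snd p = r) (arcs N)" "b \<in># filter_mset (\<lambda>p. snd p = r) (arcs N)"
    unfolding ab by simp_all
  then have snd_ab: "snd a = r" "snd b = r" by simp_all
  have "a \<noteq> b"
  proof
    assume "a = b"
    then have "count (filter_mset (\<lambda>p. snd p = r) (arcs N)) a = 2"
      unfolding ab by simp
    with phylo_net_simple[OF ph, of a] show False
      by (simp split: if_splits)
  qed
  then have "fst a \<noteq> fst b" using snd_ab by (metis prod.expand)
  moreover have "size (filter_mset (\<lambda>p. fst p = r) (arcs N)) = 1"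
    using r unfolding reticulations_def outdeg_def by simp
  then obtain d where d: "filter_mset (\<lambda>p. fst p = r) (arcs N) = {#d#}"
    using size_1_singleton_mset by blast
  have "d \<in># filter_mset (\<lambda>p. fst p = r) (arcs N)"
    unfolding d by simp
  then have "fst d = r" by simp
  ultimately show ?thesis
    using that[of "fst a" "fst b" "snd d"] ab d snd_ab by (metis prod.collapse)
qed

definition parent :: "('v, 'x) pnet \<Rightarrow> 'v \<Rightarrow> 'v" where
  "parent N l = (THE p. (p, l) \<in># arcs N)"

lemma arcs_into_leaf:
  assumes "l \<in> leaves N"
  shows "filter_mset (\<lambda>p. snd p = l) (arcs N) = {#(parent N l, l)#}"
proof -
  have "size (filter_mset (\<lambda>p. snd p = l) (arcs N)) = 1"
    using assms unfolding leaves_def indeg_def by simp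
  then obtain d where d: "filter_mset (\<lambda>p. snd p = l) (arcs N) = {#d#}"
    using size_1_singleton_mset by blast
  have "d \<in># filter_mset (\<lambda>p. snd p = l) (arcs N)"
    unfolding d by simp
  then have "snd d = l" by simp
  have "(q, l) \<in># arcs N \<longleftrightarrow> q = fst d" for q
    using arg_cong[OF d, of "\<lambda>M. (q, l) \<in># M"] \<open>snd d = l\<close> by (auto simp: prod_eq_iff)
  then have "parent N l = fst d" unfolding parent_def by blast
  then show ?thesis using d \<open>snd d = l\<close> by (metis prod.collapse)
qed

lemma count_arcs_into_leaf:
  "l \<in> leaves N \<Longrightarrow> count (arcs N) (a, l) = (if a = parent N l then 1 else 0)"
  using arg_cong[OF arcs_into_leaf, of l N "\<lambda>M. count M (a, l)"] by simp

text \<open>Moving the head of (u, v) onto f suppresses v into the arc (w, c), and v reappears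
  subdividing f.\<close>

lemma head_move_split:
  assumes arcs: "arcs N = A + {#(u, v), (w, v), (v, c), f#}"
    and avoid: "\<forall>p\<in>#A + {#(w, c), f#}. fst p \<noteq> v \<and> snd p \<noteq> v"
    and ret: "v \<in> reticulations N"
    and phylo: "phylo_net X (N\<lparr>arcs := A + {#(w, c), (fst f, v), (v, snd f), (u, v)#}\<rparr>)"
  shows "head_move X N (N\<lparr>arcs := A + {#(w, c), (fst f, v), (v, snd f), (u, v)#}\<rparr>)"
proof -
  define E1 where "E1 = arcs N - {#(u, v)#}"
  have E1: "E1 = A + {#(w, v), (v, c), f#}"
    unfolding E1_def arcs by simp
  have "(THE w'. (w', v) \<in># E1) = w"
    by (rule the_equality) (use avoid in \<open>auto simp: E1\<close>)
  moreover have "(THE c'. (v, c') \<in># E1) = c"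
    by (rule the_equality) (use avoid in \<open>auto simp: E1\<close>)
  moreover have "\<not> (f = (w, v) \<or> f = (v, c))"
    using avoid by auto
  ultimately have "N\<lparr>arcs := A + {#(w, c), (fst f, v), (v, snd f), (u, v)#}\<rparr>
      = head_move_result N u v f"
    unfolding head_move_result_def Let_def E1_def[symmetric] by (simp add: E1)
  moreover have "(u, v) \<in># arcs N" "f \<in># arcs N - {#(u, v)#}"
    by (simp_all add: arcs)
  ultimately show ?thesis
    unfolding head_move_def using ret phylo by blast
qed

section \<open>Carrying a reticulation along pendant arcs\<close>

text \<open>Apart from its pendant arcs and the three arcs at the reticulation r, the network consists
  of the arcs core; slots lists the tails of the pendant arcs together with one parent of r.\<close>

locale reticulation_shuttle =
  fixes X :: "'x set" and N :: "('v, 'x) pnet" and r :: 'v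
    and core :: "('v \<times> 'v) multiset" and slots :: "'v multiset"
  assumes phylo: "phylo_net X N"
    and core_simple: "\<forall>p. count core p \<le> 1"
    and core_acyclic: "acyclic (set_mset core)"
    and core_arcs: "\<forall>p\<in>#core. fst p \<in> nodes N \<and> snd p \<in> nodes N \<and> fst p \<noteq> r \<and> snd p \<noteq> r
                      \<and> fst p \<notin> leaves N \<and> snd p \<notin> leaves N"
    and r_node: "r \<in> nodes N" and r_not_leaf: "r \<notin> leaves N"
    and slots: "\<forall>v\<in>#slots. v \<in> nodes N \<and> v \<notin> leaves N \<and> v \<noteq> r"
    and indeg_N: "\<And>v. indeg (arcs N) v
                        = indeg core v + (if v = r then 2 else 0) + (if v \<in> leaves N then 1 else 0)"
    and outdeg_N: "\<And>v. outdeg (arcs N) v = outdeg core v + (if v = r then 1 else 0) + count slots v"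
begin

lemma fin_leaves: "finite (leaves N)"
  using finite_leaves[OF phylo] .

text \<open>The reticulation r subdivides the pendant arc of h and has the further parent e; every
  other leaf l hangs from Q l. Thus Q assigns a slot to each leaf, and e is the free slot.\<close>

definition shuttle_net :: "('v \<Rightarrow> 'v) \<Rightarrow> 'v \<Rightarrow> 'v \<Rightarrow> ('v, 'x) pnet" where
  "shuttle_net Q e h =
     N\<lparr>arcs := core + {#(e, r), (Q h, r), (r, h)#} + pendant_arcs Q (leaves N - {h})\<rparr>"

definition shuttle_state :: "('v \<Rightarrow> 'v) \<Rightarrow> 'v \<Rightarrow> 'v \<Rightarrow> bool" where
  "shuttle_state Q e h \<longleftrightarrow>
     h \<in> leaves N \<and> Q h \<noteq> e \<and> image_mset Q (mset_set (leaves N)) + {#e#} = slots"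

lemma arcs_shuttle_net:
  "arcs (shuttle_net Q e h) = core + {#(e, r), (Q h, r), (r, h)#} + pendant_arcs Q (leaves N - {h})"
  by (simp add: shuttle_net_def)

lemma nodes_shuttle_net [simp]: "nodes (shuttle_net Q e h) = nodes N"
  by (simp add: shuttle_net_def)

lemma lab_shuttle_net [simp]: "lab (shuttle_net Q e h) = lab N"
  by (simp add: shuttle_net_def)

lemma shuttle_net_cong:
  "h \<in> leaves N \<Longrightarrow> (\<And>l. l \<in> leaves N \<Longrightarrow> Q l = Q' l) \<Longrightarrow> shuttle_net Q e h = shuttle_net Q' e h"
  using pendant_arcs_cong[of "leaves N - {h}" Q Q'] unfolding shuttle_net_def by simp

lemma shuttle_state_cong:
  assumes "\<And>l. l \<in> leaves N \<Longrightarrow> Q l = Q' l"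
  shows "shuttle_state Q e h = shuttle_state Q' e h"
proof -
  have "image_mset Q (mset_set (leaves N)) = image_mset Q' (mset_set (leaves N))"
    using assms fin_leaves by (auto intro!: image_mset_cong)
  then show ?thesis
    unfolding shuttle_state_def using assms by auto
qed

lemma shuttle_net_swap: "h \<in> leaves N \<Longrightarrow> shuttle_net Q e h = shuttle_net (Q(h := e)) (Q h) h"
  using pendant_arcs_cong[of "leaves N - {h}" Q "Q(h := e)"]
  unfolding shuttle_net_def by (simp add: add_mset_commute)

lemma shuttle_state_swap: "shuttle_state Q e h \<Longrightarrow> shuttle_state (Q(h := e)) (Q h) h"
  unfolding shuttle_state_def using image_mset_fun_upd[OF fin_leaves] by auto

lemma shuttle_stateD:
  assumes "shuttle_state Q e h"
  shows "h \<in> leaves N" "Q h \<noteq> e" "e \<in> nodes N" "e \<notin> leaves N" "e \<noteq> r"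
    and "\<And>l. l \<in> leaves N \<Longrightarrow> Q l \<in> nodes N \<and> Q l \<notin> leaves N \<and> Q l \<noteq> r"
proof -
  have "e \<in># slots" "\<And>l. l \<in> leaves N \<Longrightarrow> Q l \<in># slots"
    using assms fin_leaves unfolding shuttle_state_def by auto
  then show "e \<in> nodes N" "e \<notin> leaves N" "e \<noteq> r"
    and "\<And>l. l \<in> leaves N \<Longrightarrow> Q l \<in> nodes N \<and> Q l \<notin> leaves N \<and> Q l \<noteq> r"
    using slots by blast+
  show "h \<in> leaves N" "Q h \<noteq> e"
    using assms unfolding shuttle_state_def by simp_all
qed

lemma count_slots:
  "shuttle_state Q e h \<Longrightarrow> count slots v = card {l\<in>leaves N. Q l = v} + (if e = v then 1 else 0)"
  unfolding shuttle_state_def using count_image_mset_mset_set[OF fin_leaves] by auto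

lemma core_arcsD:
  "p \<in># core \<Longrightarrow> fst p \<in> nodes N \<and> snd p \<in> nodes N \<and> fst p \<noteq> r \<and> snd p \<noteq> r
                    \<and> fst p \<notin> leaves N \<and> snd p \<notin> leaves N"
  using core_arcs by blast

lemma shuttle_net_indeg:
  "shuttle_state Q e h \<Longrightarrow> indeg (arcs (shuttle_net Q e h)) x = indeg (arcs N) x"
  using shuttle_stateD[of Q e h] r_not_leaf indeg_eq_0I[of core r] core_arcs
  by (auto simp: arcs_shuttle_net indeg_pendant_arcs fin_leaves indeg_N)

lemma shuttle_net_outdeg:
  assumes st: "shuttle_state Q e h"
  shows "outdeg (arcs (shuttle_net Q e h)) x = outdeg (arcs N) x"
proof -
  have h: "h \<in> leaves N"
    using shuttle_stateD[OF st] by simp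
  have "outdeg (arcs (shuttle_net Q e h)) x = outdeg core x + (if e = x then 1 else 0)
          + (if Q h = x then 1 else 0) + (if r = x then 1 else 0) + card {l\<in>leaves N - {h}. Q l = x}"
    by (simp add: arcs_shuttle_net outdeg_pendant_arcs fin_leaves)
  also have "\<dots> = outdeg core x + (if x = r then 1 else 0) + count slots x"
    using count_slots[OF st, of x] card_filter_remove[OF fin_leaves h, of "\<lambda>l. Q l = x"] by auto
  finally show ?thesis
    using outdeg_N by simp
qed

lemma shuttle_net_simple:
  assumes st: "shuttle_state Q e h"
  shows "count (arcs (shuttle_net Q e h)) (a, b) \<le> 1"
proof (cases "(a, b) \<in># core")
  case True
  then show ?thesis
    using core_arcsD[OF True] core_simple shuttle_stateD[OF st]
    by (auto simp: arcs_shuttle_net count_pendant_arcs fin_leaves)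
next
  case False
  then show ?thesis
    using shuttle_stateD[OF st] r_not_leaf
    by (auto simp: arcs_shuttle_net count_pendant_arcs fin_leaves not_in_iff)
qed

text \<open>The arcs into r and into the leaves are added to the acyclic core in two rounds, each
  time into nodes that are sinks for all arcs present.\<close>

lemma shuttle_net_acyclic:
  assumes st: "shuttle_state Q e h"
  shows "acyclic (set_mset (arcs (shuttle_net Q e h)))"
proof -
  note s = shuttle_stateD[OF st]
  define S where "S = set_mset core \<union> {(e, r), (Q h, r)}"
  have "acyclic S"
    by (rule acyclic_arcs_into_sinks[OF core_acyclic, of S "{r}"])
      (use s core_arcsD in \<open>auto simp: S_def\<close>)
  then show ?thesis
    by (rule acyclic_arcs_into_sinks[of S _ "leaves N"])
      (use s core_arcsD r_not_leaf in \<open>auto simp: S_def arcs_shuttle_net mem_pendant_arcs fin_leaves\<close>)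
qed

lemma shuttle_net_phylo:
  assumes st: "shuttle_state Q e h"
  shows "phylo_net X (shuttle_net Q e h)"
proof (rule phylo_net_arcs_update[OF phylo])
  show "\<forall>p\<in>#arcs (shuttle_net Q e h). fst p \<in> nodes N \<and> snd p \<in> nodes N"
    using shuttle_stateD[OF st] core_arcsD r_node leaves_subset_nodes[of N]
    by (auto simp: arcs_shuttle_net mem_pendant_arcs fin_leaves)
  show "\<forall>p. count (arcs (shuttle_net Q e h)) p \<le> 1"
    using shuttle_net_simple[OF st] by simp
qed (simp_all add: st shuttle_net_indeg shuttle_net_outdeg shuttle_net_acyclic)

lemma reticulation_r: "r \<in> reticulations N"
proof -
  have "count slots r = 0"
    using slots by (auto simp: not_in_iff[symmetric])
  then show ?thesis
    using indeg_N[of r] outdeg_N[of r] indeg_eq_0I[of core r] outdeg_eq_0I[of core r] core_arcs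
      r_node r_not_leaf
    unfolding reticulations_def by auto
qed

lemma shuttle_net_reticulation: "shuttle_state Q e h \<Longrightarrow> r \<in> reticulations (shuttle_net Q e h)"
  using reticulation_r unfolding reticulations_def by (simp add: shuttle_net_indeg shuttle_net_outdeg)

lemma pendant_arcs_avoid_r:
  "shuttle_state Q e h \<Longrightarrow> p \<in># pendant_arcs Q (leaves N - S) \<Longrightarrow> fst p \<noteq> r \<and> snd p \<noteq> r"
  using shuttle_stateD(6)[of Q e h] r_not_leaf fin_leaves by (auto simp: mem_pendant_arcs)

lemma shuttle_move:
  assumes st: "shuttle_state Q e h" and x: "x \<in> leaves N" "x \<noteq> h" "Q x \<noteq> e"
  shows "head_move X (shuttle_net Q e h) (shuttle_net Q e x)" "shuttle_state Q e x"
proof -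
  show st': "shuttle_state Q e x"
    using st x unfolding shuttle_state_def by auto
  note s = shuttle_stateD[OF st]
  define A where "A = core + pendant_arcs Q (leaves N - {h, x})"
  have "leaves N - {h} - {x} = leaves N - {h, x}" "leaves N - {x} - {h} = leaves N - {h, x}"
    by blast+
  then have "arcs (shuttle_net Q e h) = A + {#(e, r), (Q h, r), (r, h), (Q x, x)#}"
    and "shuttle_net Q e x = (shuttle_net Q e h)\<lparr>arcs := A + {#(Q h, h), (Q x, r), (r, x), (e, r)#}\<rparr>"
    using pendant_arcs_remove[of "leaves N - {h}" x Q] pendant_arcs_remove[of "leaves N - {x}" h Q]
      x s(1) fin_leaves by (simp_all add: A_def shuttle_net_def add_mset_commute)
  moreover have "\<forall>p\<in>#A + {#(Q h, h), (Q x, x)#}. fst p \<noteq> r \<and> snd p \<noteq> r"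
    using s x r_not_leaf core_arcsD by (auto simp: A_def dest: pendant_arcs_avoid_r[OF st])
  ultimately show "head_move X (shuttle_net Q e h) (shuttle_net Q e x)"
    using head_move_split[of "shuttle_net Q e h" A e r "Q h" h "(Q x, x)"]
      shuttle_net_reticulation[OF st] shuttle_net_phylo[OF st'] by simp
qed

lemma shuttle_enter:
  assumes arcs: "arcs N = C + {#(u, r), (w, r), (r, c)#} + pendant_arcs P (leaves N)"
    and core: "core = C + {#(w, c)#}" and st: "shuttle_state P u x"
  shows "head_move X N (shuttle_net P u x)"
proof -
  note s = shuttle_stateD[OF st]
  define A where "A = C + pendant_arcs P (leaves N - {x})"
  have "arcs N = A + {#(u, r), (w, r), (r, c), (P x, x)#}"
    using pendant_arcs_remove[OF fin_leaves s(1), of P] by (simp add: arcs A_def add_mset_commute)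
  moreover have "arcs (shuttle_net P u x) = A + {#(w, c), (P x, r), (r, x), (u, r)#}"
    unfolding arcs_shuttle_net by (simp add: A_def core add_mset_commute)
  then have "shuttle_net P u x = N\<lparr>arcs := A + {#(w, c), (P x, r), (r, x), (u, r)#}\<rparr>"
    by (simp add: shuttle_net_def)
  moreover have "\<forall>p\<in>#A + {#(w, c), (P x, x)#}. fst p \<noteq> r \<and> snd p \<noteq> r"
    using s r_not_leaf core_arcsD[of "(w, c)"] core_arcsD
    by (auto simp: A_def core dest: pendant_arcs_avoid_r[OF st])
  ultimately show ?thesis
    using head_move_split[of N A u r w c "(P x, x)"] reticulation_r shuttle_net_phylo[OF st] by simp
qed

lemma shuttle_leave:
  assumes core: "core = C + {#(w, c)#}" and st: "shuttle_state P u h"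
    and F: "F = N\<lparr>arcs := C + {#(u, r), (w, r), (r, c)#} + pendant_arcs P (leaves N)\<rparr>"
    and phylo_F: "phylo_net X F"
  shows "head_move X (shuttle_net P u h) F"
proof -
  note s = shuttle_stateD[OF st]
  define A where "A = C + pendant_arcs P (leaves N - {h})"
  have "arcs (shuttle_net P u h) = A + {#(u, r), (P h, r), (r, h), (w, c)#}"
    unfolding arcs_shuttle_net by (simp add: A_def core add_mset_commute)
  moreover have "F = (shuttle_net P u h)\<lparr>arcs := A + {#(P h, h), (w, r), (r, c), (u, r)#}\<rparr>"
    using pendant_arcs_remove[OF fin_leaves s(1), of P]
    by (simp add: F A_def shuttle_net_def add_mset_commute)
  moreover have "\<forall>p\<in>#A + {#(P h, h), (w, c)#}. fst p \<noteq> r \<and> snd p \<noteq> r"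
    using s r_not_leaf core_arcsD[of "(w, c)"] core_arcsD
    by (auto simp: A_def core dest: pendant_arcs_avoid_r[OF st])
  ultimately show ?thesis
    using head_move_split[of "shuttle_net P u h" A u r "P h" h "(w, c)"]
      shuttle_net_reticulation[OF st] phylo_F by simp
qed

end

section \<open>Sorting leaves with one free slot\<close>

locale shuttle_sorting =
  reticulation_shuttle X N r core slots
  for X :: "'x set" and N :: "('v, 'x) pnet" and r core slots +
  fixes T :: "'v \<Rightarrow> 'v" and u :: 'v
  assumes target_slots: "image_mset T (mset_set (leaves N)) + {#u#} = slots"
begin

definition misplaced :: "('v \<Rightarrow> 'v) \<Rightarrow> nat" where
  "misplaced Q = card {l\<in>leaves N. Q l \<noteq> T l}"

definition fixable :: "('v \<Rightarrow> 'v) \<Rightarrow> 'v \<Rightarrow> bool" where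
  "fixable Q e \<longleftrightarrow> (\<exists>x\<in>leaves N. T x = e \<and> Q x \<noteq> e \<and> Q x \<noteq> u)"

text \<open>The free slot is filled by a leaf that belongs there, so every move puts a leaf in place,
  except that a move out of the target free slot u may be needed to start a new cycle of the
  permutation. The bound drops with every move of this strategy.\<close>

definition sort_bound :: "('v \<Rightarrow> 'v) \<Rightarrow> 'v \<Rightarrow> nat" where
  "sort_bound Q e =
     (if e = u then 2 * misplaced Q else 2 * misplaced Q - 1 - (if fixable Q e then 1 else 0))"

text \<open>In the puzzle of leaves and slots: leaf x moves into the free slot e, and its old slot
  Q x becomes free.\<close>

lemma shuttle_slide:
  assumes st: "shuttle_state Q e h" and x: "x \<in> leaves N" "x \<noteq> h" "Q x \<noteq> e"
  shows "head_move X (shuttle_net Q e h) (shuttle_net (Q(x := e)) (Q x) x)"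
    and "shuttle_state (Q(x := e)) (Q x) x"
  using shuttle_move[OF st x] shuttle_net_swap[OF x(1), of Q e] shuttle_state_swap[of Q e x] by auto

lemma slot_count_eq:
  assumes "shuttle_state Q e h"
  shows "card {l\<in>leaves N. T l = y} + (if u = y then 1 else 0)
           = card {l\<in>leaves N. Q l = y} + (if e = y then 1 else 0)"
proof -
  have "count slots y = card {l\<in>leaves N. T l = y} + (if u = y then 1 else 0)"
    unfolding target_slots[symmetric] by (simp add: count_image_mset_mset_set[OF fin_leaves])
  then show ?thesis
    using count_slots[OF assms, of y] by simp
qed

lemma exists_leaf_for_slot:
  assumes st: "shuttle_state Q e h" and "e \<noteq> u"
  obtains x where "x \<in> leaves N" "T x = e" "Q x \<noteq> e"
proof (rule ccontr)
  assume "\<not> thesis"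
  then have "{l\<in>leaves N. T l = e} \<subseteq> {l\<in>leaves N. Q l = e}"
    using that by blast
  then have "card {l\<in>leaves N. T l = e} \<le> card {l\<in>leaves N. Q l = e}"
    using fin_leaves by (intro card_mono) auto
  with slot_count_eq[OF st, of e] \<open>e \<noteq> u\<close> show False
    by simp
qed

lemma misplaced_fun_upd:
  assumes "x \<in> leaves N"
  shows "misplaced (Q(x := e)) + (if Q x \<noteq> T x then 1 else 0) = misplaced Q + (if e \<noteq> T x then 1 else 0)"
proof -
  have "{l\<in>leaves N - {x}. (Q(x := e)) l \<noteq> T l} = {l\<in>leaves N - {x}. Q l \<noteq> T l}"
    by auto
  then show ?thesis
    using card_filter_remove[OF fin_leaves assms, of "\<lambda>l. Q l \<noteq> T l"]
      card_filter_remove[OF fin_leaves assms, of "\<lambda>l. (Q(x := e)) l \<noteq> T l"]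
    unfolding misplaced_def by simp
qed

lemma misplaced_pos:
  assumes "shuttle_state Q e h" "e \<noteq> u"
  shows "misplaced Q \<ge> 1"
proof -
  obtain x where "x \<in> leaves N" "T x = e" "Q x \<noteq> e"
    using exists_leaf_for_slot[OF assms] .
  then have "{l\<in>leaves N. Q l \<noteq> T l} \<noteq> {}"
    by auto
  then show ?thesis
    unfolding misplaced_def using fin_leaves by (simp add: Suc_le_eq card_gt_0_iff)
qed

lemma misplaced_eq_0D: "misplaced Q = 0 \<Longrightarrow> l \<in> leaves N \<Longrightarrow> Q l = T l"
  unfolding misplaced_def using fin_leaves by auto

lemma misplaced_le: "misplaced Q \<le> card (leaves N)"
  unfolding misplaced_def using fin_leaves by (intro card_mono) auto

lemma misplaced_less:
  assumes "c \<in> leaves N" "Q c = T c"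
  shows "misplaced Q < card (leaves N)"
  unfolding misplaced_def using assms fin_leaves by (intro psubset_card_mono) auto

lemma sort_bound_u: "sort_bound Q u = 2 * misplaced Q"
  by (simp add: sort_bound_def)

lemma sort_bound_not_u:
  "shuttle_state Q e h \<Longrightarrow> e \<noteq> u \<Longrightarrow>
   sort_bound Q e + 1 + (if fixable Q e then 1 else 0) \<le> 2 * misplaced Q"
  using misplaced_pos[of Q e h] unfolding sort_bound_def by auto

text \<open>Otherwise counting the leaves at u forces every leaf other than h into place, and then h
  as well, since the occupied slots are exactly the target slots.\<close>

lemma exists_leaf_to_open_cycle:
  assumes st: "shuttle_state Q u h" and d: "misplaced Q \<noteq> 0" and h: "T h \<noteq> u"
  shows "\<exists>z\<in>leaves N. z \<noteq> h \<and> Q z \<noteq> T z \<and> Q z \<noteq> u"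
proof (rule ccontr)
  assume "\<not> ?thesis"
  then have none: "\<And>l. l \<in> leaves N \<Longrightarrow> l \<noteq> h \<Longrightarrow> Q l \<noteq> T l \<Longrightarrow> Q l = u"
    by blast
  have h_leaf: "h \<in> leaves N"
    using shuttle_stateD(1)[OF st] .
  have "{l\<in>leaves N. T l = u} \<subseteq> {l\<in>leaves N. Q l = u}"
  proof (intro subsetI CollectI conjI)
    fix l assume "l \<in> {l\<in>leaves N. T l = u}"
    then have l: "l \<in> leaves N" "T l = u" "l \<noteq> h"
      using h by auto
    then show "Q l = u"
      using none[OF l(1,3)] by (cases "Q l = T l") simp_all
  qed simp
  moreover have "card {l\<in>leaves N. T l = u} = card {l\<in>leaves N. Q l = u}"
    using slot_count_eq[OF st, of u] by simp
  ultimately have at_u: "{l\<in>leaves N. T l = u} = {l\<in>leaves N. Q l = u}"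
    using fin_leaves by (intro card_subset_eq) simp_all
  have others: "\<forall>l\<in>leaves N - {h}. Q l = T l"
  proof
    fix l assume l: "l \<in> leaves N - {h}"
    show "Q l = T l"
    proof (rule ccontr)
      assume "Q l \<noteq> T l"
      then have "l \<in> {l\<in>leaves N. Q l = u}"
        using none l by simp
      then have "T l = u"
        unfolding at_u[symmetric] by simp
      with \<open>Q l \<noteq> T l\<close> \<open>l \<in> {l\<in>leaves N. Q l = u}\<close> show False
        by simp
    qed
  qed
  have "image_mset Q (mset_set (leaves N)) = image_mset T (mset_set (leaves N))"
    using st target_slots unfolding shuttle_state_def by (metis add_right_cancel)
  then have "Q h = T h"
    by (rule image_mset_agree_but_one[OF fin_leaves h_leaf _ others])
  with others have "{l\<in>leaves N. Q l \<noteq> T l} = {}"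
    by auto
  then have "misplaced Q = 0"
    unfolding misplaced_def by (metis card.empty)
  with d show False by simp
qed

lemma sort_step_open_cycle:
  assumes st: "shuttle_state Q u h" and h: "T h \<noteq> u" and d: "misplaced Q \<noteq> 0"
  obtains x where "x \<in> leaves N" "x \<noteq> h" "Q x \<noteq> u" "T x \<noteq> Q x"
    "sort_bound (Q(x := u)) (Q x) < sort_bound Q u"
proof -
  obtain z where z: "z \<in> leaves N" "z \<noteq> h" "Q z \<noteq> T z" "Q z \<noteq> u"
    using exists_leaf_to_open_cycle[OF st d h] by blast
  have "misplaced (Q(z := u)) \<le> misplaced Q"
    using misplaced_fun_upd[OF z(1), of Q u] z(3) by (auto split: if_splits)
  moreover have "sort_bound (Q(z := u)) (Q z) + 1 \<le> 2 * misplaced (Q(z := u))"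
    using sort_bound_not_u[OF shuttle_slide(2)[OF st z(1,2)]] z(4) by auto
  ultimately have "sort_bound (Q(z := u)) (Q z) < sort_bound Q u"
    by (simp add: sort_bound_u)
  then show ?thesis
    using that[OF z(1,2)] z by simp
qed

lemma sort_step_fill_slot:
  assumes st: "shuttle_state Q e h" and h: "T h \<noteq> e" and e: "e \<noteq> u"
  obtains x where "x \<in> leaves N" "x \<noteq> h" "Q x \<noteq> e" "T x \<noteq> Q x"
    "sort_bound (Q(x := e)) (Q x) < sort_bound Q e"
proof -
  obtain x where x: "x \<in> leaves N" "T x = e" "Q x \<noteq> e"
    and choice: "fixable Q e \<Longrightarrow> Q x \<noteq> u"
  proof (cases "fixable Q e")
    case True
    then show ?thesis
      using that unfolding fixable_def by blast
  next
    case False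
    then show ?thesis
      using that exists_leaf_for_slot[OF st e] by blast
  qed
  have x_h: "x \<noteq> h"
    using x h by auto
  have fewer: "misplaced (Q(x := e)) + 1 = misplaced Q"
    using misplaced_fun_upd[OF x(1), of Q e] x by auto
  have "sort_bound (Q(x := e)) (Q x) < sort_bound Q e"
  proof (cases "fixable Q e")
    case True
    then have "sort_bound Q e = 2 * misplaced Q - 2"
      using e unfolding sort_bound_def by simp
    then show ?thesis
      using sort_bound_not_u[OF shuttle_slide(2)[OF st x(1) x_h x(3)] choice[OF True]] fewer by auto
  next
    case False
    then have "Q x = u"
      using x unfolding fixable_def by blast
    have "sort_bound (Q(x := e)) (Q x) = 2 * misplaced (Q(x := e))"
      unfolding \<open>Q x = u\<close> by (rule sort_bound_u)
    moreover have "sort_bound Q e = 2 * misplaced Q - 1"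
      using False e unfolding sort_bound_def by simp
    ultimately show ?thesis
      using fewer by simp
  qed
  then show ?thesis
    using that[OF x(1) x_h x(3)] x by simp
qed

lemma shuttle_sorts:
  assumes "shuttle_state Q e h" and "T h \<noteq> e"
  shows "\<exists>k h'. k \<le> sort_bound Q e \<and> (head_move X ^^ k) (shuttle_net Q e h) (shuttle_net T u h')
                \<and> shuttle_state T u h'"
  using assms
proof (induction "sort_bound Q e" arbitrary: Q e h rule: less_induct)
  case less
  show ?case
  proof (cases "e = u \<and> misplaced Q = 0")
    case True
    then have agree: "\<And>l. l \<in> leaves N \<Longrightarrow> Q l = T l"
      using misplaced_eq_0D by blast
    have "shuttle_net Q e h = shuttle_net T u h"
      using shuttle_net_cong[OF shuttle_stateD(1)[OF less.prems(1)] agree] True by simp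
    moreover have "shuttle_state T u h"
      using shuttle_state_cong[of Q T e h, OF agree] less.prems(1) True by simp
    ultimately show ?thesis
      by (intro exI[of _ 0] exI[of _ h]) auto
  next
    case False
    obtain x where x: "x \<in> leaves N" "x \<noteq> h" "Q x \<noteq> e" "T x \<noteq> Q x"
      and less_bound: "sort_bound (Q(x := e)) (Q x) < sort_bound Q e"
    proof (cases "e = u")
      case True
      then show ?thesis
        using that sort_step_open_cycle[of Q h] less.prems False by blast
    next
      case False
      then show ?thesis
        using that sort_step_fill_slot[OF less.prems] by blast
    qed
    note slide = shuttle_slide[OF less.prems(1) x(1-3)]
    obtain k h' where k: "k \<le> sort_bound (Q(x := e)) (Q x)"
      "(head_move X ^^ k) (shuttle_net (Q(x := e)) (Q x) x) (shuttle_net T u h')"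
      "shuttle_state T u h'"
      using less.hyps[OF less_bound slide(2)] x(4) by blast
    have "(head_move X ^^ Suc k) (shuttle_net Q e h) (shuttle_net T u h')"
      by (rule relpowp_Suc_I2[of "head_move X", OF slide(1) k(2)])
    moreover have "Suc k \<le> sort_bound Q e"
      using k(1) less_bound by linarith
    ultimately show ?thesis
      using k(3) by blast
  qed
qed

lemma slot_u_keeps_target:
  assumes P: "image_mset P (mset_set (leaves N)) + {#u#} = slots"
    and keep: "\<forall>x\<in>leaves N. P x \<noteq> u \<longrightarrow> T x \<noteq> u"
    and z: "z \<in> leaves N" "P z \<noteq> T z"
  shows "P z \<noteq> u" "T z \<noteq> u"
proof -
  have same: "image_mset T (mset_set (leaves N)) = image_mset P (mset_set (leaves N))"
    using P target_slots by (metis add_right_cancel)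
  have "card {l\<in>leaves N. T l = u} = card {l\<in>leaves N. P l = u}"
    using arg_cong[OF same, of "\<lambda>M. count M u"] by (simp add: count_image_mset_mset_set[OF fin_leaves])
  moreover have "{l\<in>leaves N. T l = u} \<subseteq> {l\<in>leaves N. P l = u}"
    using keep by blast
  ultimately have same_u: "{l\<in>leaves N. T l = u} = {l\<in>leaves N. P l = u}"
    using fin_leaves by (intro card_subset_eq) simp_all
  show "P z \<noteq> u"
  proof
    assume "P z = u"
    then have "z \<in> {l\<in>leaves N. T l = u}"
      unfolding same_u using z(1) by simp
    with \<open>P z = u\<close> z(2) show False
      by simp
  qed
  then show "T z \<noteq> u"
    using keep z(1) by blast
qed

lemma fixable_if_all_misplaced:
  assumes P: "image_mset P (mset_set (leaves N)) + {#u#} = slots"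
    and all: "\<And>l. l \<in> leaves N \<Longrightarrow> P l \<noteq> T l"
    and keep: "\<forall>x\<in>leaves N. P x \<noteq> u \<longrightarrow> T x \<noteq> u"
    and at_u: "card {l\<in>leaves N. P l = u} \<le> 1" and two: "card (leaves N) \<ge> 2"
  obtains y where "y \<in> leaves N" "P y \<noteq> u" "fixable (P(y := u)) (P y)"
proof -
  have "leaves N \<noteq> {l\<in>leaves N. P l = u}"
    using at_u two by auto
  then obtain x where x: "x \<in> leaves N" "P x \<noteq> u"
    by blast
  have "image_mset T (mset_set (leaves N)) = image_mset P (mset_set (leaves N))"
    using P target_slots by (metis add_right_cancel)
  then have "T x \<in># image_mset P (mset_set (leaves N))"
    using x(1) fin_leaves by (metis finite_set_mset_mset_set image_eqI set_image_mset)
  then obtain y where y: "y \<in> leaves N" "P y = T x"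
    using fin_leaves by auto
  have "x \<noteq> y" "P y \<noteq> u"
    using all[OF x(1)] y keep x by auto
  then have "fixable (P(y := u)) (P y)"
    unfolding fixable_def using x y all[OF x(1)] by (intro bexI[of _ x]) auto
  then show ?thesis
    using that y(1) \<open>P y \<noteq> u\<close> by blast
qed

text \<open>The move that brings r onto a pendant arc is not a sorting move; it is paid for either by
  a leaf that is already in place or by the next move filling the free slot directly.\<close>

lemma good_first_leaf:
  assumes P: "image_mset P (mset_set (leaves N)) + {#u#} = slots" and d: "misplaced P \<noteq> 0"
    and at_u: "card {l\<in>leaves N. P l = u} \<le> 1" and two: "card (leaves N) \<ge> 2"
  obtains x where "x \<in> leaves N" "P x \<noteq> T x" "P x \<noteq> u"
    "misplaced (P(x := u)) < card (leaves N) \<or> fixable (P(x := u)) (P x)"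
proof (cases "\<exists>x\<in>leaves N. P x \<noteq> u \<and> T x = u")
  case True
  then obtain x where x: "x \<in> leaves N" "P x \<noteq> u" "T x = u"
    by blast
  have "misplaced (P(x := u)) + 1 = misplaced P"
    using misplaced_fun_upd[OF x(1), of P u] x by simp
  then show ?thesis
    using that[OF x(1) _ x(2)] x misplaced_le[of P] by simp
next
  case False
  then have keep: "\<forall>x\<in>leaves N. P x \<noteq> u \<longrightarrow> T x \<noteq> u"
    by blast
  show ?thesis
  proof (cases "misplaced P < card (leaves N)")
    case True
    have "{l\<in>leaves N. P l \<noteq> T l} \<noteq> {}"
      using d unfolding misplaced_def by (metis card.empty)
    then obtain z where z: "z \<in> leaves N" "P z \<noteq> T z"
      by blast
    have "misplaced (P(z := u)) = misplaced P"
      using misplaced_fun_upd[OF z(1), of P u] z slot_u_keeps_target[OF P keep z] by simp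
    then show ?thesis
      using that[OF z] slot_u_keeps_target[OF P keep z] True by simp
  next
    case False
    then have "card {l\<in>leaves N. P l \<noteq> T l} = card (leaves N)"
      using misplaced_le[of P] unfolding misplaced_def by simp
    then have "{l\<in>leaves N. P l \<noteq> T l} = leaves N"
      by (intro card_subset_eq[OF fin_leaves]) auto
    then have all: "\<And>l. l \<in> leaves N \<Longrightarrow> P l \<noteq> T l"
      by blast
    then obtain y where "y \<in> leaves N" "P y \<noteq> u" "fixable (P(y := u)) (P y)"
      using fixable_if_all_misplaced[OF P _ keep at_u two] by blast
    then show ?thesis
      using that all by blast
  qed
qed

end

section \<open>Permuting the leaves by head moves\<close>

lemma degrees_image_mset_map_prod:
  assumes inj: "inj_on g V" and E: "\<forall>p\<in>#E. fst p \<in> V \<and> snd p \<in> V" and x: "x \<in> V"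
  shows "indeg (image_mset (map_prod g g) E) (g x) = indeg E x"
    and "outdeg (image_mset (map_prod g g) E) (g x) = outdeg E x"
proof -
  have "filter_mset (\<lambda>p. g (snd p) = g x) E = filter_mset (\<lambda>p. snd p = x) E"
    by (rule filter_mset_cong) (use inj E x in \<open>auto simp: inj_on_def\<close>)
  then show "indeg (image_mset (map_prod g g) E) (g x) = indeg E x"
    unfolding indeg_def by (simp add: filter_mset_image_mset map_prod_def case_prod_beta)
  have "filter_mset (\<lambda>p. g (fst p) = g x) E = filter_mset (\<lambda>p. fst p = x) E"
    by (rule filter_mset_cong) (use inj E x in \<open>auto simp: inj_on_def\<close>)
  then show "outdeg (image_mset (map_prod g g) E) (g x) = outdeg E x"
    unfolding outdeg_def by (simp add: filter_mset_image_mset map_prod_def case_prod_beta)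
qed

lemma leaves_image:
  assumes b: "bij_betw g (nodes N) (nodes M)" and a: "image_mset (map_prod g g) (arcs N) = arcs M"
    and E: "\<forall>p\<in>#arcs N. fst p \<in> nodes N \<and> snd p \<in> nodes N"
  shows "leaves M = g ` leaves N"
proof
  have inj: "inj_on g (nodes N)"
    using b by (simp add: bij_betw_def)
  note deg = degrees_image_mset_map_prod[OF inj E, unfolded a]
  show "g ` leaves N \<subseteq> leaves M"
    using deg b unfolding leaves_def bij_betw_def by auto
  show "leaves M \<subseteq> g ` leaves N"
  proof
    fix y assume y: "y \<in> leaves M"
    then obtain x where x: "x \<in> nodes N" "y = g x"
      using b unfolding leaves_def bij_betw_def by auto
    then have "x \<in> leaves N"
      using y deg[of x] unfolding leaves_def by auto
    then show "y \<in> g ` leaves N"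
      using x by auto
  qed
qed

lemma phylo_net_reassign_pendants:
  assumes ph: "phylo_net X N" and arcs: "arcs N = B + pendant_arcs P (leaves N)"
    and B: "\<forall>p\<in>#B. snd p \<notin> leaves N"
    and same: "image_mset T (mset_set (leaves N)) = image_mset P (mset_set (leaves N))"
    and T: "\<forall>l\<in>leaves N. T l \<in> nodes N \<and> T l \<notin> leaves N"
  shows "phylo_net X (N\<lparr>arcs := B + pendant_arcs T (leaves N)\<rparr>)"
proof -
  let ?M = "N\<lparr>arcs := B + pendant_arcs T (leaves N)\<rparr>"
  have fin: "finite (leaves N)"
    by (rule finite_leaves[OF ph])
  have B_arcs: "p \<in># B \<Longrightarrow> p \<in># arcs N" for p
    using arcs by simp
  have outdeg: "outdeg (arcs ?M) x = outdeg (arcs N) x" for x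
  proof -
    have "card {l\<in>leaves N. T l = x} = card {l\<in>leaves N. P l = x}"
      using arg_cong[OF same, of "\<lambda>M. count M x"] by (simp add: count_image_mset_mset_set[OF fin])
    then show ?thesis
      using arcs by (simp add: outdeg_pendant_arcs fin)
  qed
  have simple: "count (arcs ?M) (a, b) \<le> 1" for a b
  proof (cases "b \<in> leaves N")
    case True
    then have "count B (a, b) = 0"
      using B by (auto simp: not_in_iff[symmetric])
    then show ?thesis
      using fin by (simp add: count_pendant_arcs)
  next
    case False
    then show ?thesis
      using fin arcs phylo_net_simple[OF ph, of "(a, b)"] by (simp add: count_pendant_arcs)
  qed
  have "acyclic (set_mset B)"
    by (rule acyclic_subset[OF phylo_net_acyclic[OF ph]]) (use B_arcs in auto)
  then have "acyclic (set_mset (arcs ?M))"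
    using acyclic_add_pendant_arcs[OF _ _ _ fin] B_arcs tail_not_leaf T by fastforce
  moreover have "\<forall>p\<in>#arcs ?M. fst p \<in> nodes N \<and> snd p \<in> nodes N"
    using phylo_net_arcs_in_nodes[OF ph] B_arcs T leaves_subset_nodes[of N] fin
    by (auto simp: mem_pendant_arcs)
  moreover have "indeg (arcs ?M) x = indeg (arcs N) x" for x
    using arcs fin by (simp add: indeg_pendant_arcs)
  ultimately show ?thesis
    using simple outdeg by (intro phylo_net_arcs_update[OF ph]) simp_all
qed

definition permute_leaves :: "('v \<Rightarrow> 'v) \<Rightarrow> ('v, 'x) pnet \<Rightarrow> ('v, 'x) pnet" where
  "permute_leaves g N = N\<lparr>arcs := image_mset (map_prod g g) (arcs N)\<rparr>"

lemma labelled_iso_permute_leaves: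
  assumes ph: "phylo_net X N"
    and \<phi>: "bij_betw \<phi> (nodes N) (nodes N')" "image_mset (map_prod \<phi> \<phi>) (arcs N) = arcs N'"
    and g: "bij_betw g (nodes N) (nodes N)" "g ` leaves N = leaves N"
      "\<forall>x\<in>leaves N. lab N (g x) = lab N' (\<phi> x)"
  shows "labelled_iso (permute_leaves g N) N'"
proof -
  define \<psi> where "\<psi> = \<phi> \<circ> inv_into (nodes N) g"
  have inj: "inj_on g (nodes N)"
    using g(1) by (simp add: bij_betw_def)
  have undo_g: "\<psi> (g x) = \<phi> x" if "x \<in> nodes N" for x
    unfolding \<psi>_def using inv_into_f_f[OF inj that] by simp
  have E: "\<forall>p\<in>#arcs N. fst p \<in> nodes N \<and> snd p \<in> nodes N"
    using phylo_net_arcs_in_nodes[OF ph] by blast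
  have "leaves (permute_leaves g N) = g ` leaves N"
    by (rule leaves_image[OF _ _ E]) (use g(1) in \<open>simp_all add: permute_leaves_def\<close>)
  then have leaves: "leaves (permute_leaves g N) = leaves N"
    using g(2) by simp
  have "bij_betw \<psi> (nodes (permute_leaves g N)) (nodes N')"
    unfolding \<psi>_def permute_leaves_def using bij_betw_trans[OF bij_betw_inv_into[OF g(1)] \<phi>(1)]
    by simp
  moreover have "image_mset (map_prod \<psi> \<psi>) (arcs (permute_leaves g N)) = arcs N'"
  proof -
    have "image_mset (map_prod \<psi> \<psi> \<circ> map_prod g g) (arcs N) = image_mset (map_prod \<phi> \<phi>) (arcs N)"
    proof (rule image_mset_cong)
      fix p assume "p \<in># arcs N"
      then show "(map_prod \<psi> \<psi> \<circ> map_prod g g) p = map_prod \<phi> \<phi> p"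
        using E undo_g by (cases p) fastforce
    qed
    then show ?thesis
      using \<phi>(2) by (simp add: permute_leaves_def image_mset.compositionality)
  qed
  moreover have "lab N' (\<psi> x) = lab (permute_leaves g N) x" if x: "x \<in> leaves N" for x
  proof -
    obtain m where m: "m \<in> leaves N" "x = g m"
      using x g(2) by auto
    then show ?thesis
      using g(3) undo_g[of m] leaves_subset_nodes[of N] by (auto simp: permute_leaves_def)
  qed
  ultimately show ?thesis
    unfolding labelled_iso_def leaves by blast
qed

text \<open>As c has at most two parents, one parent w of r is not a parent of c, so suppressing r
  into (w, c) creates no parallel arcs.\<close>

lemma reticulation_arcs_avoiding:
  assumes ph: "phylo_net X N" and r: "r \<in> reticulations N"
  obtains u w c where "u \<noteq> w" "filter_mset (\<lambda>p. snd p = r) (arcs N) = {#(u, r), (w, r)#}"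
    "filter_mset (\<lambda>p. fst p = r) (arcs N) = {#(r, c)#}" "(w, c) \<notin># arcs N"
proof -
  obtain u w c where uw: "u \<noteq> w" and in_r: "filter_mset (\<lambda>p. snd p = r) (arcs N) = {#(u, r), (w, r)#}"
    and out_r: "filter_mset (\<lambda>p. fst p = r) (arcs N) = {#(r, c)#}"
    using reticulation_arcs[OF ph r] by blast
  have "(u, r) \<in># filter_mset (\<lambda>p. snd p = r) (arcs N)" "(w, r) \<in># filter_mset (\<lambda>p. snd p = r) (arcs N)"
    "(r, c) \<in># filter_mset (\<lambda>p. fst p = r) (arcs N)"
    unfolding in_r out_r by simp_all
  then have arcs: "(u, r) \<in># arcs N" "(w, r) \<in># arcs N" "(r, c) \<in># arcs N"
    by simp_all
  then have "u \<noteq> r" "w \<noteq> r"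
    using phylo_net_no_loop[OF ph] by auto
  show ?thesis
  proof (cases "(w, c) \<in># arcs N")
    case True
    then have "(u, c) \<notin># arcs N"
      using not_three_parents[OF ph _ True arcs(3)] uw \<open>u \<noteq> r\<close> \<open>w \<noteq> r\<close> by blast
    then show ?thesis
      using that[of w u c] uw in_r out_r by (simp add: add_mset_commute)
  next
    case False
    then show ?thesis
      using that[of u w c] uw in_r out_r by blast
  qed
qed

locale reticulation_relabelling =
  fixes X :: "'x set" and N :: "('v, 'x) pnet" and g :: "'v \<Rightarrow> 'v" and r u w c :: 'v
  assumes phylo: "phylo_net X N"
    and perm: "bij_betw g (leaves N) (leaves N)" and perm_id: "\<forall>x. x \<notin> leaves N \<longrightarrow> g x = x"
    and u_ne_w: "u \<noteq> w"
    and in_r: "filter_mset (\<lambda>p. snd p = r) (arcs N) = {#(u, r), (w, r)#}"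
    and out_r: "filter_mset (\<lambda>p. fst p = r) (arcs N) = {#(r, c)#}"
    and w_c: "(w, c) \<notin># arcs N"
begin

lemma fin_leaves: "finite (leaves N)"
  using finite_leaves[OF phylo] .

lemma arcs_at_r: "(u, r) \<in># arcs N" "(w, r) \<in># arcs N" "(r, c) \<in># arcs N"
proof -
  have "(u, r) \<in># filter_mset (\<lambda>p. snd p = r) (arcs N)" "(w, r) \<in># filter_mset (\<lambda>p. snd p = r) (arcs N)"
    "(r, c) \<in># filter_mset (\<lambda>p. fst p = r) (arcs N)"
    unfolding in_r out_r by simp_all
  then show "(u, r) \<in># arcs N" "(w, r) \<in># arcs N" "(r, c) \<in># arcs N"
    by simp_all
qed

lemma ne_r: "u \<noteq> r" "w \<noteq> r" "c \<noteq> r"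
  using arcs_at_r phylo_net_no_loop[OF phylo] by auto

lemma not_leaves: "u \<notin> leaves N" "w \<notin> leaves N" "r \<notin> leaves N"
  using arcs_at_r tail_not_leaf by fastforce+

lemma in_nodes: "u \<in> nodes N" "w \<in> nodes N" "r \<in> nodes N" "c \<in> nodes N"
  using arcs_at_r phylo_net_arcs_in_nodes[OF phylo] by fastforce+

definition inner :: "('v \<times> 'v) multiset" where
  "inner = filter_mset (\<lambda>p. snd p \<notin> leaves N \<and> snd p \<noteq> r \<and> fst p \<noteq> r) (arcs N)"

lemma inner_arcsD:
  "p \<in># inner \<Longrightarrow> p \<in># arcs N \<and> fst p \<in> nodes N \<and> snd p \<in> nodes N \<and> fst p \<noteq> r \<and> snd p \<noteq> r
                    \<and> fst p \<notin> leaves N \<and> snd p \<notin> leaves N"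
  using tail_not_leaf[of p N] phylo_net_arcs_in_nodes[OF phylo, of p] unfolding inner_def by auto

lemma inner_simple: "count inner p \<le> 1"
  using phylo_net_simple[OF phylo] unfolding inner_def by (simp add: count_filter_mset)

lemma inner_acyclic: "acyclic (set_mset inner)"
  by (rule acyclic_subset[OF phylo_net_acyclic[OF phylo]]) (use inner_arcsD in auto)

lemma parent_arc:
  "l \<in> leaves N \<Longrightarrow> (parent N l, l) \<in># arcs N \<and> parent N l \<in> nodes N \<and> parent N l \<notin> leaves N"
  using arg_cong[OF arcs_into_leaf[of l N], of "\<lambda>M. (parent N l, l) \<in># M"]
    phylo_net_arcs_in_nodes[OF phylo] tail_not_leaf by fastforce

lemma parent_eq_r: "l \<in> leaves N \<Longrightarrow> parent N l = r \<Longrightarrow> l = c"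
  using arg_cong[OF out_r, of "\<lambda>M. (r, l) \<in># M"] parent_arc[of l] by auto

lemma arcs_decomp:
  "arcs N = inner + {#(u, r), (w, r), (r, c)#} + pendant_arcs (parent N) (leaves N - {c})"
proof (rule multiset_eqI)
  fix p :: "'v \<times> 'v"
  obtain a b where p: "p = (a, b)"
    by (cases p)
  have at_r: "count (arcs N) (x, r) = count {#(u, r), (w, r)#} (x, r)" for x
    using arg_cong[OF in_r, of "\<lambda>M. count M (x, r)"] by simp
  have from_r: "count (arcs N) (r, y) = count {#(r, c)#} (r, y)" for y
    using arg_cong[OF out_r, of "\<lambda>M. count M (r, y)"] by simp
  consider "b = r" | "b \<noteq> r" "a = r" | "a \<noteq> r" "b \<noteq> r" "b \<in> leaves N"
    | "a \<noteq> r" "b \<noteq> r" "b \<notin> leaves N"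
    by blast
  then show "count (arcs N) p = count (inner + {#(u, r), (w, r), (r, c)#}
               + pendant_arcs (parent N) (leaves N - {c})) p"
  proof cases
    case 1
    then show ?thesis
      using p at_r[of a] ne_r not_leaves(3) fin_leaves by (simp add: count_pendant_arcs inner_def)
  next
    case 2
    have "b \<in> leaves N \<Longrightarrow> b \<noteq> c \<Longrightarrow> parent N b \<noteq> r"
      using parent_eq_r by blast
    then show ?thesis
      using p 2 from_r[of b] fin_leaves by (auto simp: count_pendant_arcs inner_def)
  next
    case 3
    have "b = c \<Longrightarrow> parent N b = r"
      using count_arcs_into_leaf[OF 3(3), of r] arcs_at_r(3) by (auto simp: count_eq_zero_iff split: if_splits)
    then show ?thesis
      using p 3 count_arcs_into_leaf[OF 3(3), of a] fin_leaves by (auto simp: count_pendant_arcs inner_def)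
  next
    case 4
    then show ?thesis
      using p fin_leaves by (simp add: count_pendant_arcs inner_def)
  qed
qed

definition ginv :: "'v \<Rightarrow> 'v" where
  "ginv = inv_into (leaves N) g"

lemma g_leaves: "g ` leaves N = leaves N" and g_inj: "inj_on g (leaves N)"
  using perm by (auto simp: bij_betw_def)

lemma ginv_perm: "bij_betw ginv (leaves N) (leaves N)"
  unfolding ginv_def by (rule bij_betw_inv_into[OF perm])

lemma g_ginv: "l \<in> leaves N \<Longrightarrow> g (ginv l) = l"
  unfolding ginv_def using g_leaves by (simp add: f_inv_into_f)

lemma ginv_g: "l \<in> leaves N \<Longrightarrow> ginv (g l) = l"
  unfolding ginv_def using g_inj by (simp add: inv_into_f_f)

lemma image_mset_comp_ginv:
  "image_mset (P \<circ> ginv) (mset_set (leaves N)) = image_mset P (mset_set (leaves N))"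
proof -
  have "image_mset ginv (mset_set (leaves N)) = mset_set (leaves N)"
    using ginv_perm image_mset_mset_set[of ginv "leaves N"] by (simp add: bij_betw_def)
  then show ?thesis
    by (simp add: image_mset.compositionality[symmetric])
qed

lemma image_arcs:
  "image_mset (map_prod g g) (arcs N)
     = inner + {#(u, r), (w, r), (r, g c)#} + pendant_arcs (parent N \<circ> ginv) (g ` (leaves N - {c}))"
proof -
  have "image_mset (map_prod g g) inner = image_mset (\<lambda>p. p) inner"
    by (rule image_mset_cong) (use inner_arcsD perm_id in \<open>auto simp: map_prod_def case_prod_beta\<close>)
  moreover have "image_mset (map_prod g g) (pendant_arcs (parent N) (leaves N - {c}))
                   = pendant_arcs (parent N \<circ> ginv) (g ` (leaves N - {c}))"
    unfolding ginv_def by (rule image_pendant_arcs[OF g_inj g_leaves _ fin_leaves]) (use parent_arc perm_id in auto)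
  ultimately show ?thesis
    using perm_id not_leaves by (subst arcs_decomp) simp
qed

lemma two_leaves: "card (leaves N) \<ge> 2"
  using card_leaves[OF phylo] phylo unfolding phylo_net_def by simp

lemma pendant_children_u: "card {l\<in>leaves N - {c}. parent N l = u} \<le> 1"
proof -
  have "outdeg (arcs N) u = outdeg inner u + 1 + card {l\<in>leaves N - {c}. parent N l = u}"
    using u_ne_w ne_r fin_leaves by (subst arcs_decomp) (simp add: outdeg_pendant_arcs)
  moreover have "outdeg (arcs N) u \<le> 2"
    using phylo_net_outdeg_le_2[OF phylo in_nodes(1)] .
  ultimately show ?thesis
    by simp
qed

lemma no_inner_path_child_parent: "(c, w) \<notin> (set_mset inner)\<^sup>*"
proof
  assume "(c, w) \<in> (set_mset inner)\<^sup>*"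
  moreover have "set_mset inner \<subseteq> set_mset (arcs N)"
    using inner_arcsD by auto
  ultimately have "(c, w) \<in> (set_mset (arcs N))\<^sup>*"
    using rtrancl_mono by blast
  moreover have "(w, c) \<in> (set_mset (arcs N))\<^sup>+"
    using arcs_at_r by (meson r_into_trancl' trancl_into_trancl)
  ultimately have "(w, w) \<in> (set_mset (arcs N))\<^sup>+"
    by (meson trancl_rtrancl_trancl)
  then show False
    using phylo_net_acyclic[OF phylo] unfolding acyclic_def by blast
qed

lemma shuttle_sorting_inner_child:
  assumes c: "c \<notin> leaves N"
  shows "shuttle_sorting X N r (inner + {#(w, c)#}) (image_mset (parent N) (mset_set (leaves N)) + {#u#})
           (parent N \<circ> ginv) u"
proof (intro shuttle_sorting.intro reticulation_shuttle.intro shuttle_sorting_axioms.intro)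
  have decomp: "arcs N = inner + {#(u, r), (w, r), (r, c)#} + pendant_arcs (parent N) (leaves N)"
    using arcs_decomp c by simp
  show "phylo_net X N"
    by (rule phylo)
  show "\<forall>p. count (inner + {#(w, c)#}) p \<le> 1"
    using inner_simple inner_arcsD[of "(w, c)"] w_c by (auto simp: count_eq_zero_iff)
  show "acyclic (set_mset (inner + {#(w, c)#}))"
    using inner_acyclic no_inner_path_child_parent by (simp add: acyclic_insert)
  show "\<forall>p\<in>#inner + {#(w, c)#}. fst p \<in> nodes N \<and> snd p \<in> nodes N \<and> fst p \<noteq> r \<and> snd p \<noteq> r
          \<and> fst p \<notin> leaves N \<and> snd p \<notin> leaves N"
    using inner_arcsD in_nodes ne_r not_leaves c by auto
  show "r \<in> nodes N" "r \<notin> leaves N"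
    using in_nodes not_leaves by simp_all
  show "\<forall>v\<in>#image_mset (parent N) (mset_set (leaves N)) + {#u#}. v \<in> nodes N \<and> v \<notin> leaves N \<and> v \<noteq> r"
    using parent_arc parent_eq_r c in_nodes not_leaves ne_r fin_leaves by auto
  show "indeg (arcs N) v = indeg (inner + {#(w, c)#}) v + (if v = r then 2 else 0)
          + (if v \<in> leaves N then 1 else 0)" for v
    using ne_r c fin_leaves by (subst decomp) (auto simp: indeg_pendant_arcs)
  show "outdeg (arcs N) v = outdeg (inner + {#(w, c)#}) v + (if v = r then 1 else 0)
          + count (image_mset (parent N) (mset_set (leaves N)) + {#u#}) v" for v
    using fin_leaves by (subst decomp) (auto simp: outdeg_pendant_arcs count_image_mset_mset_set)
  show "image_mset (parent N \<circ> ginv) (mset_set (leaves N)) + {#u#}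
          = image_mset (parent N) (mset_set (leaves N)) + {#u#}"
    by (simp add: image_mset_comp_ginv)
qed

lemma permute_leaves_inner_child:
  assumes c: "c \<notin> leaves N"
  shows "permute_leaves g N
           = N\<lparr>arcs := inner + {#(u, r), (w, r), (r, c)#} + pendant_arcs (parent N \<circ> ginv) (leaves N)\<rparr>"
  using image_arcs c perm_id g_leaves by (simp add: permute_leaves_def)

lemma phylo_permute_leaves_inner_child:
  assumes c: "c \<notin> leaves N"
  shows "phylo_net X (permute_leaves g N)"
proof -
  have "\<forall>l\<in>leaves N. (parent N \<circ> ginv) l \<in> nodes N \<and> (parent N \<circ> ginv) l \<notin> leaves N"
    using parent_arc ginv_perm by (auto simp: bij_betw_def)
  moreover have "\<forall>p\<in>#inner + {#(u, r), (w, r), (r, c)#}. snd p \<notin> leaves N"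
    using inner_arcsD not_leaves(3) c by auto
  ultimately show ?thesis
    unfolding permute_leaves_inner_child[OF c] using arcs_decomp c
    by (intro phylo_net_reassign_pendants[OF phylo]) (simp_all add: image_mset_comp_ginv)
qed

text \<open>If c is not a leaf, r is first moved onto a pendant arc, the leaves are sorted, and r is
  moved back between w and c.\<close>

lemma permute_leaves_reachable_inner_child:
  assumes c: "c \<notin> leaves N"
  shows "\<exists>m \<le> 2 * card (leaves N). (head_move X ^^ m) N (permute_leaves g N)"
proof -
  let ?P = "parent N" and ?T = "parent N \<circ> ginv"
  interpret S: shuttle_sorting X N r "inner + {#(w, c)#}"
      "image_mset ?P (mset_set (leaves N)) + {#u#}" ?T u
    by (rule shuttle_sorting_inner_child[OF c])
  have decomp: "arcs N = inner + {#(u, r), (w, r), (r, c)#} + pendant_arcs ?P (leaves N)"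
    using arcs_decomp c by simp
  note F = permute_leaves_inner_child[OF c]
  show ?thesis
  proof (cases "S.misplaced ?P = 0")
    case True
    then have "permute_leaves g N = N"
      using S.misplaced_eq_0D decomp pendant_arcs_cong[of "leaves N" ?T ?P] unfolding F by simp
    then show ?thesis
      by (intro exI[of _ 0]) simp
  next
    case False
    obtain x where x: "x \<in> leaves N" "?P x \<noteq> ?T x" "?P x \<noteq> u"
      and paid: "S.misplaced (?P(x := u)) < card (leaves N) \<or> S.fixable (?P(x := u)) (?P x)"
      using S.good_first_leaf[OF refl False _ two_leaves] pendant_children_u c by auto
    have st: "S.shuttle_state ?P u x"
      unfolding S.shuttle_state_def using x by simp
    note st' = S.shuttle_state_swap[OF st]
    obtain k h where k: "k \<le> S.sort_bound (?P(x := u)) (?P x)"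
      and path: "(head_move X ^^ k) (S.shuttle_net (?P(x := u)) (?P x) x) (S.shuttle_net ?T u h)"
      and st_h: "S.shuttle_state ?T u h"
      using S.shuttle_sorts[OF st'] x(2) by auto
    have "head_move X N (S.shuttle_net ?P u x)"
      by (rule S.shuttle_enter[OF decomp refl st])
    moreover have "(head_move X ^^ Suc k) (S.shuttle_net ?P u x) (permute_leaves g N)"
      using relpowp_Suc_I[OF path S.shuttle_leave[OF refl st_h F phylo_permute_leaves_inner_child[OF c]]]
        S.shuttle_net_swap[OF x(1)] by simp
    ultimately have "(head_move X ^^ Suc (Suc k)) N (permute_leaves g N)"
      by (rule relpowp_Suc_I2)
    moreover have "Suc (Suc k) \<le> 2 * card (leaves N)"
      using S.sort_bound_not_u[OF st' x(3)] k paid S.misplaced_le[of "?P(x := u)"] by auto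
    ultimately show ?thesis
      by blast
  qed
qed

text \<open>If c is a leaf, N itself is a shuttle net in which c hangs from r with w as its slot.\<close>

lemma shuttle_sorting_leaf_child:
  assumes c: "c \<in> leaves N"
  shows "shuttle_sorting X N r inner (image_mset ((parent N)(c := w)) (mset_set (leaves N)) + {#u#})
           ((parent N)(c := w) \<circ> ginv) u"
proof (intro shuttle_sorting.intro reticulation_shuttle.intro shuttle_sorting_axioms.intro)
  let ?Q = "(parent N)(c := w)"
  show "phylo_net X N" "\<forall>p. count inner p \<le> 1" "acyclic (set_mset inner)"
    using phylo inner_simple inner_acyclic by simp_all
  show "\<forall>p\<in>#inner. fst p \<in> nodes N \<and> snd p \<in> nodes N \<and> fst p \<noteq> r \<and> snd p \<noteq> r
          \<and> fst p \<notin> leaves N \<and> snd p \<notin> leaves N"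
    using inner_arcsD by blast
  show "r \<in> nodes N" "r \<notin> leaves N"
    using in_nodes not_leaves by simp_all
  show "\<forall>v\<in>#image_mset ?Q (mset_set (leaves N)) + {#u#}. v \<in> nodes N \<and> v \<notin> leaves N \<and> v \<noteq> r"
    using parent_arc parent_eq_r in_nodes not_leaves ne_r fin_leaves by auto
  show "indeg (arcs N) v = indeg inner v + (if v = r then 2 else 0) + (if v \<in> leaves N then 1 else 0)" for v
    using ne_r c fin_leaves by (subst arcs_decomp) (auto simp: indeg_pendant_arcs)
  show "outdeg (arcs N) v = outdeg inner v + (if v = r then 1 else 0)
          + count (image_mset ?Q (mset_set (leaves N)) + {#u#}) v" for v
  proof -
    have "{l\<in>leaves N - {c}. ?Q l = v} = {l\<in>leaves N - {c}. parent N l = v}"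
      by auto
    then have "card {l\<in>leaves N. ?Q l = v} = card {l\<in>leaves N - {c}. parent N l = v} + (if w = v then 1 else 0)"
      using card_filter_remove[OF fin_leaves c, of "\<lambda>l. ?Q l = v"] by simp
    then show ?thesis
      using fin_leaves by (subst arcs_decomp) (simp add: outdeg_pendant_arcs count_image_mset_mset_set)
  qed
  show "image_mset (?Q \<circ> ginv) (mset_set (leaves N)) + {#u#} = image_mset ?Q (mset_set (leaves N)) + {#u#}"
    by (simp add: image_mset_comp_ginv)
qed

lemma sort_leaf_child:
  assumes c: "c \<in> leaves N"
  defines "Q \<equiv> (parent N)(c := w)"
  shows "\<exists>k h. k + 1 \<le> 2 * card (leaves N) \<and>
           (head_move X ^^ k) N (reticulation_shuttle.shuttle_net N r inner (Q \<circ> ginv) u h) \<and>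
           reticulation_shuttle.shuttle_state N (image_mset Q (mset_set (leaves N)) + {#u#}) (Q \<circ> ginv) u h"
proof -
  interpret S: shuttle_sorting X N r inner "image_mset Q (mset_set (leaves N)) + {#u#}" "Q \<circ> ginv" u
    unfolding Q_def by (rule shuttle_sorting_leaf_child[OF c])
  have "pendant_arcs Q (leaves N - {c}) = pendant_arcs (parent N) (leaves N - {c})"
    by (rule pendant_arcs_cong) (simp add: Q_def)
  then have N: "S.shuttle_net Q u c = N"
    using arcs_decomp by (simp add: S.shuttle_net_def Q_def)
  have st: "S.shuttle_state Q u c"
    unfolding S.shuttle_state_def using c u_ne_w by (simp add: Q_def)
  show ?thesis
  proof (cases "(Q \<circ> ginv) c = w")
    case True
    then obtain k h where k: "k \<le> S.sort_bound Q u"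
      "(head_move X ^^ k) (S.shuttle_net Q u c) (S.shuttle_net (Q \<circ> ginv) u h)" "S.shuttle_state (Q \<circ> ginv) u h"
      using S.shuttle_sorts[OF st] u_ne_w by auto
    moreover have "S.misplaced Q < card (leaves N)"
      using S.misplaced_less[OF c] True by (simp add: Q_def)
    ultimately show ?thesis
      using N S.sort_bound_u[of Q] by (intro exI[of _ k] exI[of _ h]) simp
  next
    case False
    note st' = S.shuttle_state_swap[OF st]
    obtain k h where k: "k \<le> S.sort_bound (Q(c := u)) (Q c)"
      "(head_move X ^^ k) (S.shuttle_net (Q(c := u)) (Q c) c) (S.shuttle_net (Q \<circ> ginv) u h)"
      "S.shuttle_state (Q \<circ> ginv) u h"
      using S.shuttle_sorts[OF st'] False by (auto simp: Q_def)
    moreover have "S.sort_bound (Q(c := u)) (Q c) + 1 \<le> 2 * card (leaves N)"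
      using S.sort_bound_not_u[OF st'] S.misplaced_le[of "Q(c := u)"] u_ne_w by (simp add: Q_def)
    ultimately show ?thesis
      using N S.shuttle_net_swap[OF c, of Q u] by (intro exI[of _ k] exI[of _ h]) simp
  qed
qed

lemma permute_leaves_reachable_leaf_child:
  assumes c: "c \<in> leaves N"
  shows "\<exists>m \<le> 2 * card (leaves N). (head_move X ^^ m) N (permute_leaves g N)"
proof -
  define Q where "Q = (parent N)(c := w)"
  interpret S: shuttle_sorting X N r inner "image_mset Q (mset_set (leaves N)) + {#u#}" "Q \<circ> ginv" u
    unfolding Q_def by (rule shuttle_sorting_leaf_child[OF c])
  obtain k h where k: "k + 1 \<le> 2 * card (leaves N)"
    and path: "(head_move X ^^ k) N (S.shuttle_net (Q \<circ> ginv) u h)"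
    and st: "S.shuttle_state (Q \<circ> ginv) u h"
    using sort_leaf_child[OF c] unfolding Q_def by blast
  have gc: "g c \<in> leaves N" "(Q \<circ> ginv) (g c) = w"
    using c g_leaves ginv_g by (auto simp: Q_def)
  have "g ` (leaves N - {c}) = leaves N - {g c}"
    using g_inj c g_leaves by (simp add: inj_on_image_set_diff)
  moreover have "pendant_arcs (parent N \<circ> ginv) (leaves N - {g c}) = pendant_arcs (Q \<circ> ginv) (leaves N - {g c})"
  proof (rule pendant_arcs_cong)
    fix l assume "l \<in> leaves N - {g c}"
    then have "ginv l \<noteq> c"
      using g_ginv by force
    then show "(parent N \<circ> ginv) l = (Q \<circ> ginv) l"
      by (simp add: Q_def)
  qed
  ultimately have F: "permute_leaves g N = S.shuttle_net (Q \<circ> ginv) u (g c)"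
    using image_arcs gc by (simp add: permute_leaves_def S.shuttle_net_def)
  show ?thesis
  proof (cases "h = g c")
    case True
    then show ?thesis
      using k path F by (intro exI[of _ k]) simp
  next
    case False
    have "head_move X (S.shuttle_net (Q \<circ> ginv) u h) (permute_leaves g N)"
      unfolding F using S.shuttle_move(1)[OF st gc(1)] False gc(2) u_ne_w by simp
    then show ?thesis
      using relpowp_Suc_I[OF path] k by (intro exI[of _ "Suc k"]) simp
  qed
qed

end

lemma permute_leaves_reachable:
  assumes ph: "phylo_net X N" and ret: "reticulations N \<noteq> {}"
    and perm: "bij_betw g (leaves N) (leaves N)" and perm_id: "\<forall>x. x \<notin> leaves N \<longrightarrow> g x = x"
  shows "\<exists>m \<le> 2 * card (leaves N). (head_move X ^^ m) N (permute_leaves g N)"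
proof -
  obtain r where r: "r \<in> reticulations N"
    using ret by blast
  obtain u w c where "u \<noteq> w" "filter_mset (\<lambda>p. snd p = r) (arcs N) = {#(u, r), (w, r)#}"
    "filter_mset (\<lambda>p. fst p = r) (arcs N) = {#(r, c)#}" "(w, c) \<notin># arcs N"
    by (rule reticulation_arcs_avoiding[OF ph r])
  then interpret reticulation_relabelling X N g r u w c
    using ph perm perm_id by unfold_locales
  show ?thesis
  proof (cases "c \<in> leaves N")
    case True
    then show ?thesis
      by (rule permute_leaves_reachable_leaf_child)
  next
    case False
    then show ?thesis
      by (rule permute_leaves_reachable_inner_child)
  qed
qed

lemma exists_leaf_permutation:
  assumes ph: "phylo_net X N" and ph': "phylo_net X N'"
    and \<phi>: "bij_betw \<phi> (nodes N) (nodes N')" "image_mset (map_prod \<phi> \<phi>) (arcs N) = arcs N'"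
  obtains g where "bij_betw g (leaves N) (leaves N)" "\<forall>x. x \<notin> leaves N \<longrightarrow> g x = x"
    "bij_betw g (nodes N) (nodes N)" "\<forall>x\<in>leaves N. lab N (g x) = lab N' (\<phi> x)"
proof -
  have lab: "bij_betw (lab N) (leaves N) X" "bij_betw (lab N') (leaves N') X"
    using ph ph' unfolding phylo_net_def by blast+
  have "leaves N' = \<phi> ` leaves N"
    by (rule leaves_image[OF \<phi>]) (use phylo_net_arcs_in_nodes[OF ph] in blast)
  then have \<phi>_leaves: "bij_betw \<phi> (leaves N) (leaves N')"
    using bij_betw_subset[OF \<phi>(1) leaves_subset_nodes] by simp
  define g where "g x = (if x \<in> leaves N then inv_into (leaves N) (lab N) (lab N' (\<phi> x)) else x)" for x
  have "bij_betw (inv_into (leaves N) (lab N) \<circ> lab N' \<circ> \<phi>) (leaves N) (leaves N)"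
    using bij_betw_trans[OF bij_betw_trans[OF \<phi>_leaves lab(2)] bij_betw_inv_into[OF lab(1)]]
    by (simp add: comp_assoc)
  then have perm: "bij_betw g (leaves N) (leaves N)"
    by (rule bij_betw_cong[THEN iffD1, rotated]) (simp add: g_def)
  moreover have "bij_betw g (nodes N - leaves N) (nodes N - leaves N)"
    by (rule bij_betw_cong[THEN iffD1, rotated, OF bij_betw_id]) (simp add: g_def)
  then have "bij_betw g (leaves N \<union> (nodes N - leaves N)) (leaves N \<union> (nodes N - leaves N))"
    by (rule bij_betw_combine[OF perm]) auto
  moreover have "leaves N \<union> (nodes N - leaves N) = nodes N"
    using leaves_subset_nodes[of N] by blast
  moreover have "lab N (g x) = lab N' (\<phi> x)" if x: "x \<in> leaves N" for x
  proof -
    have "lab N' (\<phi> x) \<in> lab N ` leaves N"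
      using bij_betwE[OF \<phi>_leaves] bij_betwE[OF lab(2)] bij_betw_imp_surj_on[OF lab(1)] x by blast
    then show ?thesis
      using x by (simp add: g_def f_inv_into_f)
  qed
  moreover have "\<forall>x. x \<notin> leaves N \<longrightarrow> g x = x"
    by (simp add: g_def)
  ultimately show ?thesis
    using that perm by simp
qed

theorem mainTheorem12:
  fixes X :: "'x set" and N :: "('v, 'x) pnet" and N' :: "('w, 'x) pnet" and k n :: nat
  assumes "phylo_net X N" and "phylo_net X N'"
    and "k > 0" and "tier N = k" and "tier N' = k"
    and "card X = n"
    and "unlabelled_iso N N'"
  shows "\<exists>m \<le> 2 * n. \<exists>S :: nat \<Rightarrow> ('v, 'x) pnet.
           S 0 = N \<and> (\<forall>i < m. head_move X (S i) (S (Suc i))) \<and> labelled_iso (S m) N'"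
proof -
  obtain \<phi> where \<phi>: "bij_betw \<phi> (nodes N) (nodes N')" "image_mset (map_prod \<phi> \<phi>) (arcs N) = arcs N'"
    using assms(7) unfolding unlabelled_iso_def by blast
  obtain g where g: "bij_betw g (leaves N) (leaves N)" "\<forall>x. x \<notin> leaves N \<longrightarrow> g x = x"
    "bij_betw g (nodes N) (nodes N)" "\<forall>x\<in>leaves N. lab N (g x) = lab N' (\<phi> x)"
    using exists_leaf_permutation[OF assms(1,2) \<phi>] by blast
  have "reticulations N \<noteq> {}"
    using assms(3,4) unfolding tier_def by auto
  then obtain m where m: "m \<le> 2 * card (leaves N)" "(head_move X ^^ m) N (permute_leaves g N)"
    using permute_leaves_reachable[OF assms(1) _ g(1,2)] by blast
  then obtain S where S: "S 0 = N" "S m = permute_leaves g N" "\<forall>i<m. head_move X (S i) (S (Suc i))"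
    unfolding relpowp_fun_conv by blast
  have "labelled_iso (permute_leaves g N) N'"
    using labelled_iso_permute_leaves[OF assms(1) \<phi> g(3) bij_betw_imp_surj_on[OF g(1)] g(4)] .
  moreover have "card (leaves N) = n"
    using card_leaves[OF assms(1)] assms(6) by simp
  ultimately show ?thesis
    using m(1) S by metis
qed

end
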